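(* Let $p$ be a prime, $e\ge1$, $q=p^e$, $0\le\ell\le e-1$, and let $a\in\mathbb{F}_q$, $a\ne0$. Let $M$ be the $n\times n$ matrix whose columns $\varphi_1,\dots,\varphi_n\in\mathbb{F}_q^n$ form an $\ell$-Galois $(a,0,a)$-equiangular tight frame for $\mathbb{F}_q^n$, and let $G_0=[I_n\mid M]$. Let $\mathcal{C}\subseteq\mathbb{F}_q^{2n}$ be the linear code generated by the rows of $G_0$. If $a=-1$, then $\mathcal{C}$ is an $\ell$-Galois self-dual code, and if $a\neq-1$, then $\mathcal{C}$ is an $\ell$-Galois LCD code.
   Context: For vectors $\mathbf{x},\mathbf{y}$ of length $N$, $(\mathbf{x},\mathbf{y})_\ell=\sum_{i=1}^N x_i^{p^\ell}y_i$. For a matrix $\Phi$, $\Phi^{\dagger_\ell}$ is the transpose of the matrix obtained by raising each entry to the power $p^\ell$. Vectors $\varphi_1,\dots,\varphi_m\in\mathbb{F}_q^n$ with matrix $\Phi$ (columns $\varphi_i$) form an $\ell$-Galois $(a,b,c)$-equiangular tight frame if they span $\mathbb{F}_q^n$, $\Phi\Phi^{\dagger_\ell}=cI_n$, $(\varphi_i,\varphi_i)_\ell=a$ for all $i$, and $(\varphi_i,\varphi_j)_\ell(\varphi_j,\varphi_i)_\ell=b$ for all $i\neq j$. The $\ell$-Galois inner product is $\langle\mathbf{x},\mathbf{y}\rangle_\ell=\sum_i x_iy_i^{p^\ell}$; the $\ell$-Galois dual of a linear code $\mathcal{C}$ is $\mathcal{C}^{\perp_\ell}=\{\mathbf{x}:\langle\mathbf{x},\mathbf{c}\rangle_\ell=0\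 \forall\mathbf{c}\in\mathcal{C}\}$; $\mathcal{C}$ is $\ell$-Galois self-dual if $\mathcal{C}=\mathcal{C}^{\perp_\ell}$ and $\ell$-Galois LCD if $\mathcal{C}\cap\mathcal{C}^{\perp_\ell}=\{\mathbf{0}\}$. *)

theory Defs
  imports "HOL-Computational_Algebra.Primes"
begin

(* Vectors of F_q^N are represented as functions nat => 'a that vanish at indices >= N
   (coordinates are indexed 0..N-1). Matrices are functions nat => nat => 'a,
   entry (i,j) = row i, column j. *)

definition vecs :: "nat \<Rightarrow> (nat \<Rightarrow> 'a::zero) set" where
  "vecs N = {x. \<forall>i\<ge>N. x i = 0}"

definition frame_ip :: "nat \<Rightarrow> nat \<Rightarrow> nat \<Rightarrow> (nat \<Rightarrow> 'a::field) \<Rightarrow> (nat \<Rightarrow> 'a) \<Rightarrow> 'a" where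
  "frame_ip p l N x y = (\<Sum>i<N. x i ^ (p ^ l) * y i)"

definition galois_ip :: "nat \<Rightarrow> nat \<Rightarrow> nat \<Rightarrow> (nat \<Rightarrow> 'a::field) \<Rightarrow> (nat \<Rightarrow> 'a) \<Rightarrow> 'a" where
  "galois_ip p l N x y = (\<Sum>i<N. x i * y i ^ (p ^ l))"

definition col :: "nat \<Rightarrow> (nat \<Rightarrow> nat \<Rightarrow> 'a::zero) \<Rightarrow> nat \<Rightarrow> (nat \<Rightarrow> 'a)" where
  "col n Phi j = (\<lambda>i. if i < n then Phi i j else 0)"

definition galois_etf ::
  "nat \<Rightarrow> nat \<Rightarrow> nat \<Rightarrow> nat \<Rightarrow> (nat \<Rightarrow> nat \<Rightarrow> 'a::field) \<Rightarrow> 'a \<Rightarrow> 'a \<Rightarrow> 'a \<Rightarrow> bool" where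
  "galois_etf p l n m Phi a b c \<longleftrightarrow>
     (\<forall>x\<in>vecs n. \<exists>t::nat \<Rightarrow> 'a. \<forall>i<n. x i = (\<Sum>j<m. t j * Phi i j)) \<and>
     (\<forall>i<n. \<forall>k<n. (\<Sum>j<m. Phi i j * Phi k j ^ (p ^ l)) = (if i = k then c else 0)) \<and>
     (\<forall>i<m. frame_ip p l n (col n Phi i) (col n Phi i) = a) \<and>
     (\<forall>i<m. \<forall>j<m. i \<noteq> j \<longrightarrow>
        frame_ip p l n (col n Phi i) (col n Phi j) * frame_ip p l n (col n Phi j) (col n Phi i) = b)"

definition gen0 :: "nat \<Rightarrow> (nat \<Rightarrow> nat \<Rightarrow> 'a::{zero,one}) \<Rightarrow> nat \<Rightarrow> nat \<Rightarrow> 'a" where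
  "gen0 n M i j = (if j < n then (if i = j then 1 else 0)
                   else if j < 2 * n then M i (j - n) else 0)"

definition row_code :: "nat \<Rightarrow> nat \<Rightarrow> (nat \<Rightarrow> nat \<Rightarrow> 'a::field) \<Rightarrow> (nat \<Rightarrow> 'a) set" where
  "row_code k N G = {x \<in> vecs N. \<exists>t::nat \<Rightarrow> 'a. \<forall>j<N. x j = (\<Sum>i<k. t i * G i j)}"

definition galois_dual :: "nat \<Rightarrow> nat \<Rightarrow> nat \<Rightarrow> (nat \<Rightarrow> 'a::field) set \<Rightarrow> (nat \<Rightarrow> 'a) set" where
  "galois_dual p l N C = {x \<in> vecs N. \<forall>c\<in>C. galois_ip p l N x c = 0}"

definition galois_self_dual :: "nat \<Rightarrow> nat \<Rightarrow> nat \<Rightarrow> (nat \<Rightarrow> 'a::field) set \<Rightarrow> bool" where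
  "galois_self_dual p l N C \<longleftrightarrow> C = galois_dual p l N C"

definition galois_LCD :: "nat \<Rightarrow> nat \<Rightarrow> nat \<Rightarrow> (nat \<Rightarrow> 'a::field) set \<Rightarrow> bool" where
  "galois_LCD p l N C \<longleftrightarrow> C \<inter> galois_dual p l N C = {\<lambda>_. 0}"

end

theory Submission
  imports Defs "HOL-Number_Theory.Residues" "Jordan_Normal_Form.Determinant"
begin

text \<open>
  Write \<open>P = p\<^sup>l\<close> and \<open>M\<^sup>\<dagger>\<close> for the transpose of \<open>M\<close> with entries raised to the
  power \<open>P\<close>; the tight-frame condition says \<open>M M\<^sup>\<dagger> = a I\<close>, hence also \<open>M\<^sup>\<dagger> M = a I\<close>.
  The codewords are the vectors \<open>(u, u M)\<close>. Since \<open>x \<mapsto> x\<^sup>P\<close> is additive in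
  characteristic \<open>p\<close>, a vector lies in \<open>\<C>\<^sup>\<perp>\<close> iff it is orthogonal to the rows of
  \<open>[I | M]\<close>, i.e. it is \<open>(v, w)\<close> with \<open>v = - w M\<^sup>\<dagger>\<close>. The inner product of a
  codeword \<open>(u, u M)\<close> with the \<open>k\<close>-th row is \<open>(1 + a) u\<^sub>k\<close>. For \<open>a = -1\<close> this
  gives \<open>\<C> \<subseteq> \<C>\<^sup>\<perp>\<close>, while \<open>(v, w) \<in> \<C>\<^sup>\<perp>\<close> gives \<open>v M = - w M\<^sup>\<dagger> M = w\<close>,
  so \<open>\<C>\<^sup>\<perp> \<subseteq> \<C>\<close>. For \<open>a \<noteq> -1\<close> a codeword in \<open>\<C>\<^sup>\<perp>\<close> has \<open>u = 0\<close>, hence is zero.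
\<close>

lemma CHAR_eq_prime_if_card_eq_power:
  assumes "prime p" and "card (UNIV :: 'a::{finite,field} set) = p ^ e"
  shows "CHAR('a) = p"
proof -
  have "prime CHAR('a)"
    by (simp add: finite_imp_CHAR_pos prime_CHAR_semidom)
  moreover have "CHAR('a) dvd p ^ e"
    using CHAR_dvd_CARD[where 'a='a] assms(2) by simp
  ultimately show ?thesis
    using assms(1) by (simp add: prime_dvd_power primes_dvd_imp_eq)
qed

lemma sum_lessThan_add:
  fixes f :: "nat \<Rightarrow> 'b::comm_monoid_add"
  shows "sum f {..<n + m} = sum f {..<n} + (\<Sum>j<m. f (n + j))"
  by (induction m) (simp_all add: add.assoc)

lemma scaled_inverse_commute:
  fixes A B :: "nat \<Rightarrow> nat \<Rightarrow> 'a::field"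
  assumes "a \<noteq> 0"
    and AB: "\<forall>i<n. \<forall>k<n. (\<Sum>j<n. A i j * B j k) = (if i = k then a else 0)"
  shows "\<forall>i<n. \<forall>k<n. (\<Sum>j<n. B i j * A j k) = (if i = k then a else 0)"
proof -
  define A' where "A' = mat n n (\<lambda>(i, j). A i j)"
  define B' where "B' = mat n n (\<lambda>(i, j). B i j / a)"
  have "A' * B' = 1\<^sub>m n"
  proof (rule eq_matI)
    fix i k assume "i < dim_row (1\<^sub>m n :: 'a mat)" "k < dim_col (1\<^sub>m n :: 'a mat)"
    then show "(A' * B') $$ (i, k) = 1\<^sub>m n $$ (i, k)"
      using AB \<open>a \<noteq> 0\<close>
      by (simp add: A'_def B'_def scalar_prod_def atLeast0LessThan flip: sum_divide_distrib)
  qed (simp_all add: A'_def B'_def)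
  then have "B' * A' = 1\<^sub>m n"
    by (rule mat_mult_left_right_inverse[rotated 2]) (simp_all add: A'_def B'_def)
  moreover have "(\<Sum>j<n. B i j * A j k) / a = (B' * A') $$ (i, k)" if "i < n" "k < n" for i k
    using that by (simp add: A'_def B'_def scalar_prod_def atLeast0LessThan sum_divide_distrib)
  ultimately show ?thesis
    using \<open>a \<noteq> 0\<close> by (simp add: divide_eq_eq split: if_splits)
qed

lemma row_in_row_code:
  assumes "i < k" and "G i \<in> vecs N"
  shows "G i \<in> row_code k N (G :: nat \<Rightarrow> nat \<Rightarrow> 'a::field)"
  using assms unfolding row_code_def by (auto intro!: exI[of _ "\<lambda>i'. of_bool (i' = i)"])

lemma galois_ip_row_code_right:
  fixes G :: "nat \<Rightarrow> nat \<Rightarrow> 'a::field"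
  assumes "prime p" and "CHAR('a) = p"
    and y: "\<forall>j<N. y j = (\<Sum>i<k. t i * G i j)"
  shows "galois_ip p l N x y = (\<Sum>i<k. t i ^ p ^ l * galois_ip p l N x (G i))"
proof -
  have frobenius: "(\<Sum>i<k. f i) ^ p ^ l = (\<Sum>i<k. f i ^ p ^ l)" for f :: "nat \<Rightarrow> 'a"
    using assms(1,2) by (intro freshmans_dream_sum') simp_all
  have "galois_ip p l N x y = (\<Sum>j<N. \<Sum>i<k. t i ^ p ^ l * (x j * G i j ^ p ^ l))"
    using y by (simp add: galois_ip_def frobenius power_mult_distrib sum_distrib_left mult_ac)
  also have "\<dots> = (\<Sum>i<k. t i ^ p ^ l * galois_ip p l N x (G i))"
    by (subst sum.swap) (simp add: galois_ip_def sum_distrib_left)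
  finally show ?thesis .
qed

lemma galois_dual_row_code:
  fixes G :: "nat \<Rightarrow> nat \<Rightarrow> 'a::field"
  assumes "prime p" and "CHAR('a) = p" and rows: "\<forall>i<k. G i \<in> vecs N"
  shows "galois_dual p l N (row_code k N G)
           = {x \<in> vecs N. \<forall>i<k. galois_ip p l N x (G i) = 0}"
proof (intro equalityI subsetI)
  fix x assume "x \<in> galois_dual p l N (row_code k N G)"
  then show "x \<in> {x \<in> vecs N. \<forall>i<k. galois_ip p l N x (G i) = 0}"
    using rows row_in_row_code unfolding galois_dual_def by blast
next
  fix x assume x: "x \<in> {x \<in> vecs N. \<forall>i<k. galois_ip p l N x (G i) = 0}"
  have "galois_ip p l N x y = 0" if "y \<in> row_code k N G" for y
  proof -
    obtain t where "\<forall>j<N. y j = (\<Sum>i<k. t i * G i j)"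
      using \<open>y \<in> row_code k N G\<close> unfolding row_code_def by blast
    then have "galois_ip p l N x y = (\<Sum>i<k. t i ^ p ^ l * galois_ip p l N x (G i))"
      by (rule galois_ip_row_code_right[OF assms(1,2)])
    then show ?thesis
      using x by simp
  qed
  then show "x \<in> galois_dual p l N (row_code k N G)"
    using x unfolding galois_dual_def by blast
qed

lemma gen0_row_in_vecs: "gen0 n M i \<in> vecs (2 * n)"
  by (simp add: vecs_def gen0_def)

lemma row_code_gen0_iff:
  fixes M :: "nat \<Rightarrow> nat \<Rightarrow> 'a::field"
  shows "x \<in> row_code n (2 * n) (gen0 n M) \<longleftrightarrow>
           x \<in> vecs (2 * n) \<and> (\<forall>j<n. x (n + j) = (\<Sum>i<n. x i * M i j))"
proof -
  have head: "(\<Sum>i<n. t i * gen0 n M i j) = t j" if "j < n" for t j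
    using that by (simp add: gen0_def if_distrib[of "\<lambda>c. _ * c"] cong: if_cong)
  have tail: "(\<Sum>i<n. t i * gen0 n M i (n + j)) = (\<Sum>i<n. t i * M i j)" if "j < n" for t j
    using that by (simp add: gen0_def)
  have split: "(\<forall>j<2 * n. Q j) \<longleftrightarrow> (\<forall>j<n. Q j) \<and> (\<forall>j<n. Q (n + j))" for Q
    by (metis add_diff_inverse_nat add_less_cancel_left mult_2 trans_less_add1)
  show ?thesis
    unfolding row_code_def mem_Collect_eq split by (auto simp: head tail)
qed

lemma gen0_codeword_eq_zeroI:
  fixes M :: "nat \<Rightarrow> nat \<Rightarrow> 'a::field"
  assumes x: "x \<in> row_code n (2 * n) (gen0 n M)" and head: "\<forall>k<n. x k = 0"
  shows "x = (\<lambda>_. 0)"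
proof
  fix i
  have tail: "\<forall>j<n. x (n + j) = 0"
    using x head by (simp add: row_code_gen0_iff)
  show "x i = 0"
  proof (cases "i < 2 * n")
    case True
    then show ?thesis
      using head tail by (metis add_diff_inverse_nat mult_2 nat_add_left_cancel_less)
  next
    case False
    then show ?thesis
      using x by (simp add: row_code_gen0_iff vecs_def)
  qed
qed

lemma galois_ip_gen0_row:
  fixes M :: "nat \<Rightarrow> nat \<Rightarrow> 'a::field"
  assumes "p > 0" and "k < n"
  shows "galois_ip p l (2 * n) x (gen0 n M k) = x k + (\<Sum>j<n. x (n + j) * M k j ^ p ^ l)"
proof -
  have "gen0 n M k j ^ p ^ l = of_bool (k = j)" if "j < n" for j
    using that \<open>p > 0\<close> by (simp add: gen0_def)
  then have "(\<Sum>j<n. x j * gen0 n M k j ^ p ^ l) = x k"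
    using \<open>k < n\<close> by simp
  then show ?thesis
    by (simp add: galois_ip_def mult_2 sum_lessThan_add gen0_def)
qed

lemma galois_ip_codeword_gen0_row:
  fixes M :: "nat \<Rightarrow> nat \<Rightarrow> 'a::field"
  assumes "p > 0" and "k < n"
    and tight: "\<forall>i<n. \<forall>k<n. (\<Sum>j<n. M i j * M k j ^ p ^ l) = (if i = k then a else 0)"
    and x: "x \<in> row_code n (2 * n) (gen0 n M)"
  shows "galois_ip p l (2 * n) x (gen0 n M k) = (1 + a) * x k"
proof -
  have "\<forall>j<n. x (n + j) = (\<Sum>i<n. x i * M i j)"
    using x row_code_gen0_iff by blast
  then have "(\<Sum>j<n. x (n + j) * M k j ^ p ^ l) = (\<Sum>j<n. \<Sum>i<n. x i * (M i j * M k j ^ p ^ l))"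
    by (simp add: sum_distrib_left mult_ac)
  also have "\<dots> = (\<Sum>i<n. x i * (\<Sum>j<n. M i j * M k j ^ p ^ l))"
    by (subst sum.swap) (simp add: sum_distrib_left)
  also have "\<dots> = (\<Sum>i<n. x i * (if i = k then a else 0))"
    using tight \<open>k < n\<close> by (intro sum.cong) simp_all
  also have "\<dots> = a * x k"
    using \<open>k < n\<close> by (simp add: if_distrib[of "\<lambda>c. _ * c"] mult.commute cong: if_cong)
  finally show ?thesis
    by (simp add: galois_ip_gen0_row[OF assms(1,2)] distrib_right)
qed

lemma orthogonal_to_gen0_rows_head_mult:
  fixes M :: "nat \<Rightarrow> nat \<Rightarrow> 'a::field"
  assumes adj: "\<forall>i<n. \<forall>k<n. (\<Sum>j<n. M j i ^ P * M j k) = (if i = k then a else 0)"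
    and orth: "\<forall>k<n. x k + (\<Sum>i<n. x (n + i) * M k i ^ P) = 0" and "j < n"
  shows "(\<Sum>k<n. x k * M k j) = - a * x (n + j)"
proof -
  have "x k = - (\<Sum>i<n. x (n + i) * M k i ^ P)" if "k < n" for k
    using orth that by (simp add: eq_neg_iff_add_eq_0)
  then have "(\<Sum>k<n. x k * M k j) = (\<Sum>k<n. - (\<Sum>i<n. x (n + i) * M k i ^ P) * M k j)"
    by (intro sum.cong) simp_all
  also have "\<dots> = - (\<Sum>k<n. \<Sum>i<n. x (n + i) * (M k i ^ P * M k j))"
    by (simp add: sum_distrib_left sum_distrib_right sum_negf mult_ac)
  also have "\<dots> = - (\<Sum>i<n. x (n + i) * (\<Sum>k<n. M k i ^ P * M k j))"
    by (subst sum.swap) (simp add: sum_distrib_left)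
  also have "\<dots> = - (\<Sum>i<n. x (n + i) * (if i = j then a else 0))"
    using adj \<open>j < n\<close> by (intro arg_cong[where f = uminus] sum.cong) simp_all
  also have "\<dots> = - a * x (n + j)"
    using \<open>j < n\<close> by (simp add: if_distrib[of "\<lambda>c. _ * c"] mult.commute cong: if_cong)
  finally show ?thesis .
qed

lemma galois_self_dual_gen0_code:
  fixes M :: "nat \<Rightarrow> nat \<Rightarrow> 'a::field"
  assumes "prime p" and "CHAR('a) = p"
    and tight: "\<forall>i<n. \<forall>k<n. (\<Sum>j<n. M i j * M k j ^ p ^ l) = (if i = k then -1 else 0)"
  shows "galois_self_dual p l (2 * n) (row_code n (2 * n) (gen0 n M))"
proof -
  let ?C = "row_code n (2 * n) (gen0 n M)"
  have "p > 0"
    using \<open>prime p\<close> by (simp add: prime_gt_0_nat)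
  have dual: "galois_dual p l (2 * n) ?C
      = {x \<in> vecs (2 * n). \<forall>k<n. galois_ip p l (2 * n) x (gen0 n M k) = 0}"
    using galois_dual_row_code[OF assms(1,2)] gen0_row_in_vecs by blast
  have "?C \<subseteq> galois_dual p l (2 * n) ?C"
    using galois_ip_codeword_gen0_row[OF \<open>p > 0\<close> _ tight] unfolding dual
    by (auto simp: row_code_gen0_iff)
  moreover have "galois_dual p l (2 * n) ?C \<subseteq> ?C"
  proof
    fix x assume "x \<in> galois_dual p l (2 * n) ?C"
    then have "x \<in> vecs (2 * n)" and orth: "\<forall>k<n. x k + (\<Sum>i<n. x (n + i) * M k i ^ p ^ l) = 0"
      unfolding dual by (simp_all add: galois_ip_gen0_row[OF \<open>p > 0\<close>])
    moreover have "x (n + j) = (\<Sum>k<n. x k * M k j)" if "j < n" for j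
    proof -
      have "\<forall>i<n. \<forall>k<n. (\<Sum>j<n. M j i ^ p ^ l * M j k) = (if i = k then -1 else 0)"
        using scaled_inverse_commute[of "-1" n M "\<lambda>j k. M k j ^ p ^ l"] tight by simp
      from orthogonal_to_gen0_rows_head_mult[OF this orth \<open>j < n\<close>] show ?thesis
        by simp
    qed
    ultimately show "x \<in> ?C"
      by (simp add: row_code_gen0_iff)
  qed
  ultimately show ?thesis
    unfolding galois_self_dual_def by blast
qed

lemma galois_LCD_gen0_code:
  fixes M :: "nat \<Rightarrow> nat \<Rightarrow> 'a::field"
  assumes "p > 0"
    and tight: "\<forall>i<n. \<forall>k<n. (\<Sum>j<n. M i j * M k j ^ p ^ l) = (if i = k then a else 0)"
    and "a \<noteq> -1"
  shows "galois_LCD p l (2 * n) (row_code n (2 * n) (gen0 n M))"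
proof -
  let ?C = "row_code n (2 * n) (gen0 n M)"
  have "x = (\<lambda>_. 0)" if x: "x \<in> ?C" and x_dual: "x \<in> galois_dual p l (2 * n) ?C" for x
  proof (rule gen0_codeword_eq_zeroI[OF x], intro allI impI)
    fix k assume "k < n"
    have "(1 + a) * x k = galois_ip p l (2 * n) x (gen0 n M k)"
      using galois_ip_codeword_gen0_row[OF \<open>p > 0\<close> \<open>k < n\<close> tight x] by simp
    also have "\<dots> = 0"
      using x_dual \<open>k < n\<close> row_in_row_code gen0_row_in_vecs unfolding galois_dual_def by blast
    finally show "x k = 0"
      using \<open>a \<noteq> -1\<close> by (simp add: add_eq_0_iff)
  qed
  moreover have "(\<lambda>_. 0) \<in> ?C \<inter> galois_dual p l (2 * n) ?C"
    by (auto simp: row_code_gen0_iff vecs_def galois_dual_def galois_ip_def)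
  ultimately show ?thesis
    unfolding galois_LCD_def by blast
qed

theorem mainTheorem6:
  fixes p e l n :: nat and a :: "'a::{finite,field}" and M :: "nat \<Rightarrow> nat \<Rightarrow> 'a"
  assumes "prime p" and "e \<ge> 1" and "card (UNIV :: 'a set) = p ^ e" and "l \<le> e - 1"
    and "a \<noteq> 0"
    and "galois_etf p l n n M a 0 a"
  shows "(a = -1 \<longrightarrow> galois_self_dual p l (2 * n) (row_code n (2 * n) (gen0 n M)))
       \<and> (a \<noteq> -1 \<longrightarrow> galois_LCD p l (2 * n) (row_code n (2 * n) (gen0 n M)))"
proof -
  have "CHAR('a) = p"
    using CHAR_eq_prime_if_card_eq_power assms(1,3) by blast
  moreover have "p > 0"
    using \<open>prime p\<close> by (simp add: prime_gt_0_nat)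
  moreover have "\<forall>i<n. \<forall>k<n. (\<Sum>j<n. M i j * M k j ^ p ^ l) = (if i = k then a else 0)"
    using assms(6) unfolding galois_etf_def by blast
  ultimately show ?thesis
    using galois_self_dual_gen0_code[OF \<open>prime p\<close>] galois_LCD_gen0_code by blast
qed

end
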